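(* Let $(\mathcal V,\{C_n\}_n,e)$ be an operator system and let $p\in\mathcal V$ satisfy $0\le p\le e$. Then $\{C(p_n)\}_n$ is a (not necessarily proper) matrix ordering on $\mathcal V$, and $p$ is an Archimedean matrix order unit for $(\mathcal V,\{C(p_n)\}_n)$.
   Context: $e_n=I_n\otimes e$, $p_n=I_n\otimes p$, and $C(p_n)=\{x\in M_n(\mathcal V): x=x^*,\ \forall\epsilon>0\ \exists t>0 \text{ such that } x+\epsilon p_n+t(e_n-p_n)\in C_n\}$. A (not necessarily proper) matrix ordering is a sequence of cones $D_n\subseteq M_n(\mathcal V)_h$ with $\alpha^*D_n\alpha\subseteq D_m$ for all $\alpha\in M_{n,m}$. An element $u$ is an Archimedean matrix order unit for $\{D_n\}$ if for every hermitian $x\in M_n(\mathcal V)$ there is $r>0$ with $r u_n-x\in D_n$ (where $u_n=I_n\otimes u$), and $x+\epsilon u_n\in D_n$ for all $\epsilon>0$ implies $x\in D_n$. *)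

theory Defs
  imports Complex_Main
begin

definition cvs :: "(complex \<Rightarrow> 'v::ab_group_add \<Rightarrow> 'v) \<Rightarrow> bool" where
  "cvs sm \<longleftrightarrow> (\<forall>a b x. sm a (sm b x) = sm (a * b) x) \<and> (\<forall>x. sm 1 x = x)
     \<and> (\<forall>a x y. sm a (x + y) = sm a x + sm a y) \<and> (\<forall>a b x. sm (a + b) x = sm a x + sm b x)"

definition star_space :: "(complex \<Rightarrow> 'v::ab_group_add \<Rightarrow> 'v) \<Rightarrow> ('v \<Rightarrow> 'v) \<Rightarrow> bool" where
  "star_space sm st \<longleftrightarrow> cvs sm \<and> (\<forall>x. st (st x) = x) \<and> (\<forall>x y. st (x + y) = st x + st y)
     \<and> (\<forall>a x. st (sm a x) = sm (cnj a) (st x))"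

(* matrices over 'v: entries indexed from 0; an n x m matrix is zero outside {..<n} x {..<m} *)
type_synonym 'v mat = "nat \<Rightarrow> nat \<Rightarrow> 'v"

definition in_mat :: "nat \<Rightarrow> nat \<Rightarrow> 'a::zero mat \<Rightarrow> bool" where
  "in_mat n m x \<longleftrightarrow> (\<forall>i j. \<not> (i < n \<and> j < m) \<longrightarrow> x i j = 0)"

definition mherm :: "('v \<Rightarrow> 'v) \<Rightarrow> nat \<Rightarrow> 'v::zero mat \<Rightarrow> bool" where
  "mherm st n x \<longleftrightarrow> in_mat n n x \<and> (\<forall>i<n. \<forall>j<n. x i j = st (x j i))"

definition madd :: "'v::plus mat \<Rightarrow> 'v mat \<Rightarrow> 'v mat" where
  "madd x y = (\<lambda>i j. x i j + y i j)"

definition mrs :: "(complex \<Rightarrow> 'v \<Rightarrow> 'v) \<Rightarrow> real \<Rightarrow> 'v mat \<Rightarrow> 'v mat" where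
  "mrs sm t x = (\<lambda>i j. sm (complex_of_real t) (x i j))"

(* u_n = I_n \<otimes> u *)
definition amp :: "nat \<Rightarrow> 'v::zero \<Rightarrow> 'v mat" where
  "amp n u = (\<lambda>i j. if i = j \<and> i < n then u else 0)"

(* alpha^* x alpha for alpha in M_{n,m}(C), x in M_n(V); result in M_m(V) *)
definition congr :: "(complex \<Rightarrow> 'v::comm_monoid_add \<Rightarrow> 'v) \<Rightarrow> nat \<Rightarrow> nat \<Rightarrow> complex mat \<Rightarrow> 'v mat \<Rightarrow> 'v mat" where
  "congr sm n m \<alpha> x = (\<lambda>i j. if i < m \<and> j < m
      then (\<Sum>k<n. \<Sum>l<n. sm (cnj (\<alpha> k i) * \<alpha> l j) (x k l)) else 0)"

definition matrix_ordering :: "(complex \<Rightarrow> 'v::ab_group_add \<Rightarrow> 'v) \<Rightarrow> ('v \<Rightarrow> 'v) \<Rightarrow> (nat \<Rightarrow> 'v mat set) \<Rightarrow> bool" where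
  "matrix_ordering sm st D \<longleftrightarrow>
     (\<forall>n\<ge>1. D n \<subseteq> {x. mherm st n x} \<and> (\<lambda>i j. 0) \<in> D n
        \<and> (\<forall>x\<in>D n. \<forall>y\<in>D n. madd x y \<in> D n)
        \<and> (\<forall>x\<in>D n. \<forall>t::real. t \<ge> 0 \<longrightarrow> mrs sm t x \<in> D n))
   \<and> (\<forall>n\<ge>1. \<forall>m\<ge>1. \<forall>\<alpha>. in_mat n m \<alpha> \<longrightarrow> (\<forall>x\<in>D n. congr sm n m \<alpha> x \<in> D m))"

definition proper_ordering :: "(complex \<Rightarrow> 'v::ab_group_add \<Rightarrow> 'v) \<Rightarrow> (nat \<Rightarrow> 'v mat set) \<Rightarrow> bool" where
  "proper_ordering sm D \<longleftrightarrow> (\<forall>n\<ge>1. \<forall>x\<in>D n. mrs sm (-1) x \<in> D n \<longrightarrow> x = (\<lambda>i j. 0))"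

definition arch_unit :: "(complex \<Rightarrow> 'v::ab_group_add \<Rightarrow> 'v) \<Rightarrow> ('v \<Rightarrow> 'v) \<Rightarrow> (nat \<Rightarrow> 'v mat set) \<Rightarrow> 'v \<Rightarrow> bool" where
  "arch_unit sm st D u \<longleftrightarrow>
     (\<forall>n\<ge>1. \<forall>x. mherm st n x \<longrightarrow> (\<exists>r::real. r > 0 \<and> madd (mrs sm r (amp n u)) (mrs sm (-1) x) \<in> D n))
   \<and> (\<forall>n\<ge>1. \<forall>x. mherm st n x \<longrightarrow> (\<forall>\<epsilon>::real. \<epsilon> > 0 \<longrightarrow> madd x (mrs sm \<epsilon> (amp n u)) \<in> D n) \<longrightarrow> x \<in> D n)"

definition operator_system :: "(complex \<Rightarrow> 'v::ab_group_add \<Rightarrow> 'v) \<Rightarrow> ('v \<Rightarrow> 'v) \<Rightarrow> (nat \<Rightarrow> 'v mat set) \<Rightarrow> 'v \<Rightarrow> bool" where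
  "operator_system sm st C e \<longleftrightarrow> star_space sm st \<and> matrix_ordering sm st C
     \<and> proper_ordering sm C \<and> arch_unit sm st C e"

definition Cp :: "(complex \<Rightarrow> 'v::ab_group_add \<Rightarrow> 'v) \<Rightarrow> ('v \<Rightarrow> 'v) \<Rightarrow> (nat \<Rightarrow> 'v mat set) \<Rightarrow> 'v \<Rightarrow> 'v \<Rightarrow> nat \<Rightarrow> 'v mat set" where
  "Cp sm st C e p n = {x. mherm st n x \<and> (\<forall>\<epsilon>::real. \<epsilon> > 0 \<longrightarrow> (\<exists>t::real. t > 0 \<and>
      madd (madd x (mrs sm \<epsilon> (amp n p))) (mrs sm t (madd (amp n e) (mrs sm (-1) (amp n p)))) \<in> C n))}"

end

theory Submission
  imports Defs "HOL-Library.Function_Algebras"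
begin

(* Sums, positive multiples and the Archimedean closure pass to C(p\<^sub>n) by splitting or rescaling
   the slack term \<epsilon> p\<^sub>n + t (e\<^sub>n - p\<^sub>n). For a compression \<alpha>\<^sup>* x \<alpha> the point is that
   \<alpha>\<^sup>* (I\<^sub>n \<otimes> q) \<alpha> = \<alpha>\<^sup>*\<alpha> \<otimes> q, and that K I\<^sub>m - \<alpha>\<^sup>*\<alpha>, with K the squared Frobenius norm of \<alpha>,
   is half the Gram matrix of the vectors cnj(\<alpha>\<^sub>k\<^sub>a) e\<^sub>b - cnj(\<alpha>\<^sub>k\<^sub>b) e\<^sub>a (Lagrange's identity).
   Since w\<^sup>*w \<otimes> q = w\<^sup>* q w is positive for every row vector w and positive q, this gives
   \<alpha>\<^sup>* q\<^sub>n \<alpha> \<le> K q\<^sub>m for q = p and q = e - p, which absorbs the compressed slack term.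
   That p is an order unit follows from e\<^sub>n = p\<^sub>n + (e - p)\<^sub>n. *)

lemma madd_eq_plus: "madd x y = x + y"
  by (simp add: madd_def fun_eq_iff)

lemma zero_mat_eq: "(\<lambda>i j. 0) = (0 :: 'a::zero mat)"
  by (simp add: fun_eq_iff)

lemma amp_add: "amp n (a + b) = amp n a + amp n (b :: 'v::monoid_add)"
  by (simp add: amp_def fun_eq_iff)

lemma amp_diff: "amp n (a - b) = amp n a - amp n (b :: 'v::group_add)"
  by (simp add: amp_def fun_eq_iff)

definition kron :: "(complex \<Rightarrow> 'v \<Rightarrow> 'v) \<Rightarrow> nat \<Rightarrow> complex mat \<Rightarrow> 'v \<Rightarrow> 'v::zero mat" where
  "kron sm m H q = (\<lambda>i j. if i < m \<and> j < m then sm (H i j) q else 0)"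

definition gram :: "'s set \<Rightarrow> ('s \<Rightarrow> nat \<Rightarrow> complex) \<Rightarrow> complex mat" where
  "gram S w = (\<lambda>i j. \<Sum>s\<in>S. cnj (w s i) * w s j)"

lemma kron_cong: "(\<And>i j. i < m \<Longrightarrow> j < m \<Longrightarrow> H i j = H' i j) \<Longrightarrow> kron sm m H q = kron sm m H' q"
  by (simp add: kron_def fun_eq_iff)

lemma gram_insert: "finite S \<Longrightarrow> s \<notin> S \<Longrightarrow> gram (insert s S) w = (\<lambda>i j. cnj (w s i) * w s j) + gram S w"
  by (simp add: gram_def fun_eq_iff)

definition wedge :: "(nat \<Rightarrow> complex) \<Rightarrow> nat \<times> nat \<Rightarrow> nat \<Rightarrow> complex" where
  "wedge w = (\<lambda>(a, b) l. (if l = b then cnj (w a) else 0) - (if l = a then cnj (w b) else 0))"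

lemma lagrange_identity:
  fixes w :: "nat \<Rightarrow> complex"
  assumes "i < m" "j < m"
  shows "gram ({..<m} \<times> {..<m}) (wedge w) i j
    = 2 * (of_real (\<Sum>a<m. (cmod (w a))\<^sup>2) * of_bool (i = j) - cnj (w i) * w j)"
proof -
  have "gram ({..<m} \<times> {..<m}) (wedge w) i j
     = (\<Sum>a<m. \<Sum>b<m. if b = i then w a * cnj (w a) * of_bool (i = j) else 0)
        - (\<Sum>a<m. \<Sum>b<m. if b = i then (if a = j then w a * cnj (w b) else 0) else 0)
        - (\<Sum>a<m. \<Sum>b<m. if a = i then (if b = j then w b * cnj (w a) else 0) else 0)
        + (\<Sum>a<m. \<Sum>b<m. if a = i then w b * cnj (w b) * of_bool (i = j) else 0)"
    unfolding gram_def wedge_def sum.cartesian_product sum_subtractf[symmetric] sum.distrib[symmetric]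
    by (intro sum.cong refl) auto
  also have "(\<Sum>a<m. \<Sum>b<m. if a = i then (if b = j then w b * cnj (w a) else 0) else 0) = w j * cnj (w i)"
    using assms by (subst sum.swap) simp
  also have "(\<Sum>a<m. \<Sum>b<m. if a = i then w b * cnj (w b) * of_bool (i = j) else 0)
      = (\<Sum>a<m. w a * cnj (w a)) * of_bool (i = j)"
    using assms by (subst sum.swap) (simp add: sum_distrib_right)
  finally have "gram ({..<m} \<times> {..<m}) (wedge w) i j
     = 2 * ((\<Sum>a<m. w a * cnj (w a)) * of_bool (i = j) - cnj (w i) * w j)"
    using assms by (simp add: sum_distrib_right algebra_simps)
  then show ?thesis
    by (simp flip: complex_norm_square)
qed

lemma frobenius_minus_gram:
  fixes \<alpha> :: "complex mat"
  assumes "i < m" "j < m"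
  shows "of_real (\<Sum>k<n. \<Sum>a<m. (cmod (\<alpha> k a))\<^sup>2) * of_bool (i = j) - gram {..<n} \<alpha> i j
    = gram ({..<n} \<times> {..<m} \<times> {..<m}) (\<lambda>(k, ab). wedge (\<alpha> k) ab) i j / 2"
proof -
  have "gram ({..<n} \<times> {..<m} \<times> {..<m}) (\<lambda>(k, ab). wedge (\<alpha> k) ab) i j
    = (\<Sum>k<n. gram ({..<m} \<times> {..<m}) (wedge (\<alpha> k)) i j)"
    unfolding gram_def sum.cartesian_product' by simp
  also have "\<dots> = (\<Sum>k<n. 2 * (of_real (\<Sum>a<m. (cmod (\<alpha> k a))\<^sup>2) * of_bool (i = j) - cnj (\<alpha> k i) * \<alpha> k j))"
    using lagrange_identity[OF assms] by simp
  also have "\<dots> = 2 * (of_real (\<Sum>k<n. \<Sum>a<m. (cmod (\<alpha> k a))\<^sup>2) * of_bool (i = j) - gram {..<n} \<alpha> i j)"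
    by (simp add: gram_def sum_subtractf sum_distrib_left sum_distrib_right del: sum_mult_of_bool_eq)
  finally show ?thesis
    by simp
qed

locale complex_module = module sm for sm :: "complex \<Rightarrow> 'v::ab_group_add \<Rightarrow> 'v"
begin

lemma mrs_add_right: "mrs sm t (x + y) = mrs sm t x + mrs sm t y"
  and mrs_diff_right: "mrs sm t (x - y) = mrs sm t x - mrs sm t y"
  and mrs_add_left: "mrs sm (s + t) x = mrs sm s x + mrs sm t x"
  and mrs_mrs: "mrs sm s (mrs sm t x) = mrs sm (s * t) x"
  and mrs_zero_left: "mrs sm 0 x = 0"
  and mrs_minus_one: "mrs sm (-1) x = - x"
  by (simp_all add: mrs_def fun_eq_iff algebra_simps)

lemma kron_add: "kron sm m (H + H') q = kron sm m H q + kron sm m H' q"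
  and kron_diff: "kron sm m (H - H') q = kron sm m H q - kron sm m H' q"
  and mrs_kron: "mrs sm t (kron sm m H q) = kron sm m (\<lambda>i j. of_real t * H i j) q"
  by (simp_all add: kron_def mrs_def fun_eq_iff algebra_simps)

lemma amp_eq_kron: "amp m q = kron sm m (\<lambda>i j. of_bool (i = j)) q"
  by (simp add: amp_def kron_def fun_eq_iff)

lemma congr_add: "congr sm n m \<alpha> (x + y) = congr sm n m \<alpha> x + congr sm n m \<alpha> y"
  by (simp add: congr_def fun_eq_iff scale_right_distrib sum.distrib)

lemma congr_mrs: "congr sm n m \<alpha> (mrs sm t x) = mrs sm t (congr sm n m \<alpha> x)"
  by (simp add: congr_def mrs_def fun_eq_iff scale_sum_right mult.commute)

lemma congr_amp: "congr sm n m \<alpha> (amp n q) = kron sm m (gram {..<n} \<alpha>) q"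
  by (simp add: congr_def amp_def kron_def gram_def fun_eq_iff scale_sum_left if_distrib cong: if_cong)

lemma congr_row: "congr sm 1 m (\<lambda>k i. if k = 0 \<and> i < m then w i else 0) (amp 1 q)
    = kron sm m (\<lambda>i j. cnj (w i) * w j) q"
  by (simp add: congr_def amp_def kron_def fun_eq_iff)

end

locale conj_linear = complex_module sm for sm :: "complex \<Rightarrow> 'v::ab_group_add \<Rightarrow> 'v" +
  fixes st :: "'v \<Rightarrow> 'v"
  assumes st_add: "st (x + y) = st x + st y"
    and st_scale: "st (sm a x) = sm (cnj a) (st x)"
begin

sublocale st: additive st
  by standard (rule st_add)

(* Oriented so that the entry equations can be used by simp without looping. *)
lemma mherm_iff: "mherm st n x \<longleftrightarrow> in_mat n n x \<and> (\<forall>i<n. \<forall>j<n. st (x j i) = x i j)"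
  unfolding mherm_def by metis

lemma mherm_zero: "mherm st n 0"
  by (simp add: mherm_iff in_mat_def st.zero)

lemma mherm_amp: "st q = q \<Longrightarrow> mherm st n (amp n q)"
  by (simp add: mherm_iff in_mat_def amp_def st.zero)

lemma mherm_add: "mherm st n x \<Longrightarrow> mherm st n y \<Longrightarrow> mherm st n (x + y)"
  and mherm_diff: "mherm st n x \<Longrightarrow> mherm st n y \<Longrightarrow> mherm st n (x - y)"
  and mherm_mrs: "mherm st n x \<Longrightarrow> mherm st n (mrs sm t x)"
  unfolding mherm_iff in_mat_def mrs_def by (simp_all add: st.add st.diff st_scale)

lemma mherm_congr:
  assumes "mherm st n x"
  shows "mherm st m (congr sm n m \<alpha> x)"
proof -
  have "in_mat m m (congr sm n m \<alpha> x)"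
    by (simp add: in_mat_def congr_def)
  moreover have "congr sm n m \<alpha> x i j = st (congr sm n m \<alpha> x j i)" if "i < m" "j < m" for i j
  proof -
    have "st (congr sm n m \<alpha> x j i) = (\<Sum>k<n. \<Sum>l<n. sm (\<alpha> k j * cnj (\<alpha> l i)) (st (x k l)))"
      using that by (simp add: congr_def st.sum st_scale)
    also have "\<dots> = (\<Sum>k<n. \<Sum>l<n. sm (cnj (\<alpha> l i) * \<alpha> k j) (x l k))"
      using assms unfolding mherm_iff by (intro sum.cong refl) (simp add: mult.commute)
    also have "\<dots> = congr sm n m \<alpha> x i j"
      using that by (subst sum.swap) (simp add: congr_def)
    finally show ?thesis ..
  qed
  ultimately show ?thesis
    unfolding mherm_def by blast
qed

end

locale matrix_ordered = complex_module sm for sm :: "complex \<Rightarrow> 'v::ab_group_add \<Rightarrow> 'v" +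
  fixes st :: "'v \<Rightarrow> 'v" and C :: "nat \<Rightarrow> 'v mat set"
  assumes matrix_ordering: "matrix_ordering sm st C"
begin

lemma cone_herm: "n \<ge> 1 \<Longrightarrow> x \<in> C n \<Longrightarrow> mherm st n x"
  and cone_zero: "n \<ge> 1 \<Longrightarrow> 0 \<in> C n"
  and cone_add: "n \<ge> 1 \<Longrightarrow> x \<in> C n \<Longrightarrow> y \<in> C n \<Longrightarrow> x + y \<in> C n"
  and cone_mrs: "n \<ge> 1 \<Longrightarrow> x \<in> C n \<Longrightarrow> t \<ge> 0 \<Longrightarrow> mrs sm t x \<in> C n"
  and cone_congr: "n \<ge> 1 \<Longrightarrow> m \<ge> 1 \<Longrightarrow> in_mat n m \<alpha> \<Longrightarrow> x \<in> C n \<Longrightarrow> congr sm n m \<alpha> x \<in> C m"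
  using matrix_ordering by (auto simp: matrix_ordering_def madd_eq_plus zero_mat_eq)

lemma kron_gram_in_cone:
  assumes "finite S" "m \<ge> 1" "amp 1 q \<in> C 1"
  shows "kron sm m (gram S w) q \<in> C m"
  using assms(1)
proof (induction S rule: finite_induct)
  case empty
  have "kron sm m (gram {} w) q = 0"
    by (simp add: kron_def gram_def fun_eq_iff)
  then show ?case
    using cone_zero[OF assms(2)] by (simp only:)
next
  case (insert s S)
  have "kron sm m (\<lambda>i j. cnj (w s i) * w s j) q \<in> C m"
    unfolding congr_row[symmetric] using assms by (intro cone_congr) (auto simp: in_mat_def)
  moreover have "kron sm m (gram (insert s S) w) q
      = kron sm m (\<lambda>i j. cnj (w s i) * w s j) q + kron sm m (gram S w) q"
    by (simp only: gram_insert[OF insert.hyps] kron_add)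
  ultimately show ?case
    using cone_add[OF assms(2)] insert.IH by metis
qed

lemma amp_in_cone:
  assumes "m \<ge> 1" "amp 1 q \<in> C 1"
  shows "amp m q \<in> C m"
proof -
  have "amp m q = kron sm m (gram {..<m} (\<lambda>s i. of_bool (i = s))) q"
    unfolding amp_eq_kron by (rule kron_cong) (simp add: gram_def)
  then show ?thesis
    using kron_gram_in_cone[OF finite_lessThan assms] by (simp only:)
qed

lemma congr_amp_bound:
  assumes "m \<ge> 1" "amp 1 q \<in> C 1" "(\<Sum>k<n. \<Sum>a<m. (cmod (\<alpha> k a))\<^sup>2) \<le> K"
  shows "mrs sm K (amp m q) - congr sm n m \<alpha> (amp n q) \<in> C m"
proof -
  define F where "F = (\<Sum>k<n. \<Sum>a<m. (cmod (\<alpha> k a))\<^sup>2)"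
  have "mrs sm F (amp m q) - congr sm n m \<alpha> (amp n q)
      = mrs sm (1/2) (kron sm m (gram ({..<n} \<times> {..<m} \<times> {..<m}) (\<lambda>(k, ab). wedge (\<alpha> k) ab)) q)"
    unfolding congr_amp unfolding amp_eq_kron mrs_kron kron_diff[symmetric]
    by (rule kron_cong) (simp only: minus_apply F_def frobenius_minus_gram, simp)
  moreover have "mrs sm (1/2) (kron sm m (gram ({..<n} \<times> {..<m} \<times> {..<m}) (\<lambda>(k, ab). wedge (\<alpha> k) ab)) q) \<in> C m"
    using assms by (intro cone_mrs kron_gram_in_cone[OF _ assms(1,2)]) auto
  moreover have "mrs sm (K - F) (amp m q) \<in> C m"
    using assms amp_in_cone[OF assms(1,2)] by (intro cone_mrs) (auto simp: F_def)
  moreover have "mrs sm K (amp m q) - congr sm n m \<alpha> (amp n q)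
      = mrs sm (K - F) (amp m q) + (mrs sm F (amp m q) - congr sm n m \<alpha> (amp n q))"
    by (simp add: add_diff_eq flip: mrs_add_left)
  ultimately show ?thesis
    using cone_add[OF assms(1)] by (simp only:)
qed

end

locale positive_contraction = conj_linear sm st + matrix_ordered sm st C
  for sm :: "complex \<Rightarrow> 'v::ab_group_add \<Rightarrow> 'v" and st C +
  fixes e p :: 'v
  assumes order_unit: "arch_unit sm st C e"
    and p_pos: "amp 1 p \<in> C 1"
    and e_minus_p_pos: "amp 1 (e - p) \<in> C 1"
begin

lemma p_selfadjoint: "st p = p"
  using cone_herm[OF _ p_pos] by (simp add: mherm_def amp_def)

lemma amp_e_pos: "n \<ge> 1 \<Longrightarrow> amp n e \<in> C n"
  using cone_add amp_in_cone[OF _ p_pos] amp_in_cone[OF _ e_minus_p_pos]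
  by (metis amp_add add.commute diff_add_cancel)

lemma Cp_iff: "x \<in> Cp sm st C e p n \<longleftrightarrow> mherm st n x \<and>
    (\<forall>\<epsilon>>0. \<exists>t>0. x + mrs sm \<epsilon> (amp n p) + mrs sm t (amp n (e - p)) \<in> C n)"
  by (simp add: Cp_def madd_eq_plus mrs_minus_one amp_diff)

lemma CpE:
  assumes "x \<in> Cp sm st C e p n" "\<epsilon> > 0"
  obtains t where "t > 0" "x + mrs sm \<epsilon> (amp n p) + mrs sm t (amp n (e - p)) \<in> C n"
  using assms by (auto simp: Cp_iff)

lemma Cp_zero:
  assumes "n \<ge> 1"
  shows "0 \<in> Cp sm st C e p n"
proof -
  have "0 + mrs sm \<epsilon> (amp n p) + mrs sm \<epsilon> (amp n (e - p)) \<in> C n" if "\<epsilon> > 0" for \<epsilon>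
    using cone_mrs[OF assms amp_e_pos[OF assms], of \<epsilon>] that
    by (simp add: amp_add[symmetric] mrs_add_right[symmetric])
  then show ?thesis
    by (auto simp: Cp_iff mherm_zero)
qed

lemma Cp_add:
  assumes "n \<ge> 1" "x \<in> Cp sm st C e p n" "y \<in> Cp sm st C e p n"
  shows "x + y \<in> Cp sm st C e p n"
proof -
  have "\<exists>t>0. x + y + mrs sm \<epsilon> (amp n p) + mrs sm t (amp n (e - p)) \<in> C n" if "\<epsilon> > 0" for \<epsilon>
  proof -
    obtain s where s: "s > 0" "x + mrs sm (\<epsilon>/2) (amp n p) + mrs sm s (amp n (e - p)) \<in> C n"
      using CpE[OF assms(2)] \<open>\<epsilon> > 0\<close> by (metis half_gt_zero)
    obtain t where t: "t > 0" "y + mrs sm (\<epsilon>/2) (amp n p) + mrs sm t (amp n (e - p)) \<in> C n"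
      using CpE[OF assms(3)] \<open>\<epsilon> > 0\<close> by (metis half_gt_zero)
    have "(x + mrs sm (\<epsilon>/2) (amp n p) + mrs sm s (amp n (e - p)))
        + (y + mrs sm (\<epsilon>/2) (amp n p) + mrs sm t (amp n (e - p)))
        = x + y + mrs sm \<epsilon> (amp n p) + mrs sm (s + t) (amp n (e - p))"
      by (simp add: algebra_simps flip: mrs_add_left)
    then show ?thesis
      using cone_add[OF assms(1) s(2) t(2)] s(1) t(1) by (metis add_pos_pos)
  qed
  then show ?thesis
    using assms by (simp add: Cp_iff mherm_add)
qed

lemma Cp_mrs:
  assumes "n \<ge> 1" "x \<in> Cp sm st C e p n" "c \<ge> 0"
  shows "mrs sm c x \<in> Cp sm st C e p n"
proof (cases "c = 0")
  case True
  then show ?thesis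
    using Cp_zero[OF assms(1)] by (simp add: mrs_zero_left)
next
  case False
  then have "c > 0"
    using assms(3) by simp
  have "\<exists>t>0. mrs sm c x + mrs sm \<epsilon> (amp n p) + mrs sm t (amp n (e - p)) \<in> C n" if "\<epsilon> > 0" for \<epsilon>
  proof -
    obtain t where t: "t > 0" "x + mrs sm (\<epsilon>/c) (amp n p) + mrs sm t (amp n (e - p)) \<in> C n"
      using CpE[OF assms(2)] \<open>\<epsilon> > 0\<close> \<open>c > 0\<close> by (metis divide_pos_pos)
    have "mrs sm c (x + mrs sm (\<epsilon>/c) (amp n p) + mrs sm t (amp n (e - p)))
        = mrs sm c x + mrs sm \<epsilon> (amp n p) + mrs sm (c * t) (amp n (e - p))"
      using \<open>c > 0\<close> by (simp add: mrs_add_right mrs_mrs)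
    then show ?thesis
      using cone_mrs[OF assms(1) t(2), of c] \<open>c > 0\<close> t(1) by (metis less_eq_real_def mult_pos_pos)
  qed
  then show ?thesis
    using assms by (simp add: Cp_iff mherm_mrs)
qed

lemma Cp_congr:
  assumes "n \<ge> 1" "m \<ge> 1" "in_mat n m \<alpha>" "x \<in> Cp sm st C e p n"
  shows "congr sm n m \<alpha> x \<in> Cp sm st C e p m"
proof -
  define K where "K = (\<Sum>k<n. \<Sum>a<m. (cmod (\<alpha> k a))\<^sup>2) + 1"
  have "K > 0"
    unfolding K_def by (simp add: add_nonneg_pos sum_nonneg)
  have "\<exists>t>0. congr sm n m \<alpha> x + mrs sm \<epsilon> (amp m p) + mrs sm t (amp m (e - p)) \<in> C m" if "\<epsilon> > 0" for \<epsilon>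
  proof -
    define \<delta> where "\<delta> = \<epsilon> / K"
    have "\<delta> > 0" "\<delta> * K = \<epsilon>"
      unfolding \<delta>_def using \<open>\<epsilon> > 0\<close> \<open>K > 0\<close> by auto
    obtain t where t: "t > 0" "x + mrs sm \<delta> (amp n p) + mrs sm t (amp n (e - p)) \<in> C n"
      using CpE[OF assms(4) \<open>\<delta> > 0\<close>] by blast
    let ?P = "congr sm n m \<alpha> (amp n p)" and ?Q = "congr sm n m \<alpha> (amp n (e - p))"
    have "congr sm n m \<alpha> (x + mrs sm \<delta> (amp n p) + mrs sm t (amp n (e - p))) \<in> C m"
      by (rule cone_congr[OF assms(1-3) t(2)])
    moreover have "mrs sm \<delta> (mrs sm K (amp m p) - ?P) \<in> C m"
      using congr_amp_bound[OF assms(2) p_pos] \<open>\<delta> > 0\<close> by (intro cone_mrs[OF assms(2)]) (auto simp: K_def)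
    moreover have "mrs sm t (mrs sm K (amp m (e - p)) - ?Q) \<in> C m"
      using congr_amp_bound[OF assms(2) e_minus_p_pos] t(1) by (intro cone_mrs[OF assms(2)]) (auto simp: K_def)
    moreover have "congr sm n m \<alpha> (x + mrs sm \<delta> (amp n p) + mrs sm t (amp n (e - p)))
        + mrs sm \<delta> (mrs sm K (amp m p) - ?P) + mrs sm t (mrs sm K (amp m (e - p)) - ?Q)
        = congr sm n m \<alpha> x + mrs sm \<epsilon> (amp m p) + mrs sm (t * K) (amp m (e - p))"
      using \<open>\<delta> * K = \<epsilon>\<close> by (simp add: congr_add congr_mrs mrs_diff_right mrs_mrs)
    ultimately show ?thesis
      using cone_add[OF assms(2)] t(1) \<open>K > 0\<close> by (metis mult_pos_pos)
  qed
  then show ?thesis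
    using assms by (simp add: Cp_iff mherm_congr)
qed

lemma matrix_ordering_Cp: "matrix_ordering sm st (Cp sm st C e p)"
  unfolding matrix_ordering_def madd_eq_plus zero_mat_eq
  using Cp_zero Cp_add Cp_mrs Cp_congr by (auto simp: Cp_iff)

lemma Cp_order_unit:
  assumes "n \<ge> 1" "mherm st n x"
  shows "\<exists>r>0. mrs sm r (amp n p) - x \<in> Cp sm st C e p n"
proof -
  have "\<forall>n\<ge>1. \<forall>x. mherm st n x \<longrightarrow> (\<exists>r>0. mrs sm r (amp n e) - x \<in> C n)"
    using order_unit by (simp add: arch_unit_def madd_eq_plus mrs_minus_one)
  then obtain r where r: "r > 0" "mrs sm r (amp n e) - x \<in> C n"
    using assms by blast
  have "mrs sm r (amp n p) - x + mrs sm \<epsilon> (amp n p) + mrs sm r (amp n (e - p)) \<in> C n" if "\<epsilon> > 0" for \<epsilon>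
  proof -
    have "mrs sm r (amp n e) - x + mrs sm \<epsilon> (amp n p) \<in> C n"
      using that by (intro cone_add[OF assms(1) r(2)] cone_mrs[OF assms(1) amp_in_cone[OF assms(1) p_pos]]) auto
    moreover have "mrs sm r (amp n p) - x + mrs sm \<epsilon> (amp n p) + mrs sm r (amp n (e - p))
        = mrs sm r (amp n e) - x + mrs sm \<epsilon> (amp n p)"
      by (simp add: amp_diff mrs_diff_right algebra_simps)
    ultimately show ?thesis
      by (simp only:)
  qed
  moreover have "mherm st n (mrs sm r (amp n p) - x)"
    using assms by (simp add: mherm_diff mherm_mrs mherm_amp p_selfadjoint)
  ultimately show ?thesis
    using r(1) by (auto simp: Cp_iff)
qed

lemma Cp_archimedean:
  assumes "mherm st n x" "\<And>\<epsilon>. \<epsilon> > 0 \<Longrightarrow> x + mrs sm \<epsilon> (amp n p) \<in> Cp sm st C e p n"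
  shows "x \<in> Cp sm st C e p n"
proof -
  have "\<exists>t>0. x + mrs sm \<epsilon> (amp n p) + mrs sm t (amp n (e - p)) \<in> C n" if pos: "\<epsilon> > 0" for \<epsilon>
  proof -
    have half: "x + mrs sm (\<epsilon>/2) (amp n p) \<in> Cp sm st C e p n"
      using assms(2) pos by simp
    obtain t where t: "t > 0"
        "x + mrs sm (\<epsilon>/2) (amp n p) + mrs sm (\<epsilon>/2) (amp n p) + mrs sm t (amp n (e - p)) \<in> C n"
      using CpE[OF half half_gt_zero[OF pos]] by blast
    moreover have "x + mrs sm (\<epsilon>/2) (amp n p) + mrs sm (\<epsilon>/2) (amp n p) = x + mrs sm \<epsilon> (amp n p)"
      by (simp add: add.assoc flip: mrs_add_left)
    ultimately show ?thesis
      by auto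
  qed
  then show ?thesis
    using assms(1) by (simp add: Cp_iff)
qed

lemma arch_unit_Cp: "arch_unit sm st (Cp sm st C e p) p"
  unfolding arch_unit_def madd_eq_plus mrs_minus_one
  using Cp_order_unit Cp_archimedean by auto

end

theorem proposition4p7:
  fixes sm :: "complex \<Rightarrow> 'v::ab_group_add \<Rightarrow> 'v" and st :: "'v \<Rightarrow> 'v"
    and C :: "nat \<Rightarrow> 'v mat set" and e p :: 'v
  assumes "operator_system sm st C e"
    and "amp 1 p \<in> C 1"
    and "madd (amp 1 e) (mrs sm (-1) (amp 1 p)) \<in> C 1"
  shows "matrix_ordering sm st (Cp sm st C e p) \<and> arch_unit sm st (Cp sm st C e p) p"
proof -
  have star: "star_space sm st" and ordering: "matrix_ordering sm st C" and unit: "arch_unit sm st C e"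
    using assms(1) by (simp_all add: operator_system_def)
  interpret conj_linear sm st
    using star by unfold_locales (simp_all add: star_space_def cvs_def)
  have "amp 1 (e - p) \<in> C 1"
    using assms(3) by (simp add: madd_eq_plus mrs_minus_one amp_diff)
  then interpret positive_contraction sm st C e p
    using ordering unit assms(2) by unfold_locales
  show ?thesis
    using matrix_ordering_Cp arch_unit_Cp by blast
qed

end
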